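(* Let $A\in\mathbb{R}^{N\times N}$ be invertible and equilibrated in the $L^2$ norm (every row of $A$ has Euclidean norm $1$), and suppose $AA^T$ has at most $K$ nonzero elements in every row. Then for any invertible diagonal matrix $G\in\mathbb{R}^{N\times N}$, $$\kappa(A)=\|A\|_2\|A^{-1}\|_{S^4}\le\sqrt K\,\|G^{-1}A\|_2\|A^{-1}G\|_{S^4}=\sqrt K\,\kappa(G^{-1}A).$$
   Context: For invertible $B$, $\kappa(B):=\|B\|_2\|B^{-1}\|_{S^4}$, where $\|\cdot\|_2$ is the spectral norm and $\|M\|_{S^4}:=\left(\sum_n s_n^4\right)^{1/4}$ with $s_n$ the singular values of $M$. *)

theory Defs
  imports "HOL-Analysis.Analysis"
begin

definition spec_norm :: "real^'n^'m \<Rightarrow> real" where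
  "spec_norm M = onorm (\<lambda>x. M *v x)"

definition diag_mat :: "real^'n \<Rightarrow> real^'n^'n" where
  "diag_mat s = (\<chi> i j. if i = j then s $ i else 0)"

definition singular_values :: "real^'n^'n \<Rightarrow> real^'n" where
  "singular_values M = (SOME s. (\<forall>i. 0 \<le> s $ i) \<and>
     (\<exists>U V. orthogonal_matrix U \<and> orthogonal_matrix V \<and> M = U ** diag_mat s ** transpose V))"

definition schatten4 :: "real^'n^'n \<Rightarrow> real" where
  "schatten4 M = (\<Sum>i\<in>UNIV. (singular_values M $ i) ^ 4) powr (1/4)"

definition kappa :: "real^'n^'n \<Rightarrow> real" where
  "kappa B = spec_norm B * schatten4 (matrix_inv B)"

end

theory Submission
  imports Defs
begin

text \<open>The spectral-norm factor is controlled by sparsity: the Gram matrix \<open>A A\<^sup>T\<close> of the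
  unit rows has entries in \<open>[-1, 1]\<close> and at most \<open>K\<close> nonzero entries per row, so
  \<open>y\<^sup>T A A\<^sup>T y \<le> K |y|\<^sup>2\<close>, i.e. \<open>\<parallel>A\<parallel>\<^sub>2 \<le> \<surd>K\<close>.
  The Schatten factor is controlled by the scaling. Row \<open>i\<close> of \<open>G\<^sup>-\<^sup>1 A\<close> is \<open>A\<^sub>i / g\<^sub>i\<close>,
  so \<open>m = max\<^sub>i |1 / g\<^sub>i|\<close> is at most \<open>\<parallel>G\<^sup>-\<^sup>1 A\<parallel>\<^sub>2\<close>. A singular value decomposition shows
  that \<open>\<parallel>M\<parallel>\<^sub>S\<^sub>4\<^sup>4\<close> is the sum of the squared entries of \<open>M\<^sup>T M\<close>, and for a diagonal \<open>D\<close> the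
  Gram matrix of \<open>X D\<close> is \<open>D X\<^sup>T X D\<close>, whose entries are those of \<open>X\<^sup>T X\<close> scaled by
  \<open>d\<^sub>i d\<^sub>j\<close>. Taking \<open>X = A\<^sup>-\<^sup>1 G\<close> and \<open>D = G\<^sup>-\<^sup>1\<close> gives
  \<open>\<parallel>A\<^sup>-\<^sup>1\<parallel>\<^sub>S\<^sub>4 \<le> m \<parallel>A\<^sup>-\<^sup>1 G\<parallel>\<^sub>S\<^sub>4\<close>.\<close>

lemma matrix_inv_right:
  fixes A :: "real^'n^'n"
  assumes "invertible A"
  shows "A ** matrix_inv A = mat 1"
  using someI_ex[OF assms[unfolded invertible_def]] unfolding matrix_inv_def by blast

lemma matrix_inv_left:
  fixes A :: "real^'n^'n"
  assumes "invertible A"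
  shows "matrix_inv A ** A = mat 1"
  using someI_ex[OF assms[unfolded invertible_def]] unfolding matrix_inv_def by blast

lemma matrix_inv_eqI:
  fixes A B :: "real^'n^'n"
  assumes AB: "A ** B = mat 1"
  shows "matrix_inv A = B"
proof -
  have "invertible A" unfolding invertible_right_inverse using AB by blast
  have "matrix_inv A = matrix_inv A ** (A ** B)" by (simp add: AB)
  also have "\<dots> = (matrix_inv A ** A) ** B" by (simp add: matrix_mul_assoc)
  also have "\<dots> = B" by (simp add: matrix_inv_left \<open>invertible A\<close>)
  finally show ?thesis .
qed

lemma invertible_matrix_inv:
  fixes A :: "real^'n^'n"
  assumes "invertible A"
  shows "invertible (matrix_inv A)"
  unfolding invertible_right_inverse using matrix_inv_left[OF assms] by blast

lemma inner_matrix_vector_mult_transpose: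
  fixes M :: "real^'n^'m"
  shows "(M *v x) \<bullet> y = x \<bullet> (transpose M *v y)"
  by (metis dot_lmul_matrix vector_transpose_matrix)

lemma matrix_inv_matrix_inv_mult:
  fixes A G :: "real^'n^'n"
  assumes "invertible A" "invertible G"
  shows "matrix_inv (matrix_inv G ** A) = matrix_inv A ** G"
proof (rule matrix_inv_eqI)
  have "(matrix_inv G ** A) ** (matrix_inv A ** G) = matrix_inv G ** (A ** matrix_inv A) ** G"
    by (simp add: matrix_mul_assoc)
  then show "(matrix_inv G ** A) ** (matrix_inv A ** G) = mat 1"
    by (simp add: matrix_inv_right[OF assms(1)] matrix_inv_left[OF assms(2)])
qed

section \<open>The spectral theorem for symmetric matrices\<close>

lemma linear_le_quadratic_imp_zero:
  fixes a D :: real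
  assumes "0 \<le> a" and quad: "\<And>t. 0 < t \<Longrightarrow> t * a \<le> t\<^sup>2 * D"
  shows "a = 0"
proof (rule ccontr)
  assume "a \<noteq> 0"
  with assms(1) have a: "0 < a" by simp
  define t where "t = a / (\<bar>D\<bar> + 1)"
  have t: "0 < t" unfolding t_def using a by (simp add: add_pos_nonneg)
  have "a \<le> t * D" using quad[OF t] t by (simp add: power2_eq_square mult.assoc)
  also have "\<dots> \<le> t * \<bar>D\<bar>" using t by (simp add: mult_left_mono)
  also have "\<dots> < a" unfolding t_def using a by (simp add: divide_less_eq mult.commute)
  finally show False by simp
qed

lemma quadratic_form_attains_max_on_subspace:
  fixes S :: "real^'n^'n" and W :: "(real^'n) set"
  assumes W: "subspace W" and ne: "W \<noteq> {0}"
  obtains x where "x \<in> W" "norm x = 1"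
    "\<And>z. z \<in> W \<Longrightarrow> z \<bullet> (S *v z) \<le> (x \<bullet> (S *v x)) * (norm z)\<^sup>2"
proof -
  define C where "C = W \<inter> sphere 0 1"
  have "compact C" unfolding C_def using closed_subspace[OF W] compact_sphere by blast
  obtain w where w: "w \<in> W" "w \<noteq> 0" using ne subspace_0[OF W] by blast
  have "w /\<^sub>R norm w \<in> C" using w W unfolding C_def by (simp add: subspace_scale)
  then have "C \<noteq> {}" by blast
  moreover have "continuous_on C (\<lambda>x. x \<bullet> (S *v x))"
    by (intro continuous_intros linear_continuous_on matrix_vector_mul_bounded_linear)
  ultimately obtain x where x: "x \<in> C" and max: "\<And>y. y \<in> C \<Longrightarrow> y \<bullet> (S *v y) \<le> x \<bullet> (S *v x)"
    using continuous_attains_sup[OF \<open>compact C\<close>] by blast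
  have "z \<bullet> (S *v z) \<le> (x \<bullet> (S *v x)) * (norm z)\<^sup>2" if "z \<in> W" for z
  proof (cases "z = 0")
    case False
    have "z /\<^sub>R norm z \<in> C" using \<open>z \<in> W\<close> W False unfolding C_def by (simp add: subspace_scale)
    then have "(z /\<^sub>R norm z) \<bullet> (S *v (z /\<^sub>R norm z)) \<le> x \<bullet> (S *v x)"
      by (rule max)
    then have "(z \<bullet> (S *v z)) / (norm z)\<^sup>2 \<le> x \<bullet> (S *v x)"
      by (simp add: matrix_vector_mult_scaleR power2_eq_square divide_inverse mult_ac)
    then show ?thesis using False by (simp add: divide_le_eq mult.commute)
  qed simp
  with x that show ?thesis unfolding C_def by auto
qed

text \<open>The first variation of the Rayleigh quotient at a maximiser \<open>x\<close> in the direction of the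
  residual \<open>y = S x - (x \<bullet> S x) x\<close> is \<open>2 |y|\<^sup>2\<close>, so the residual must vanish.\<close>
lemma rayleigh_maximizer_is_eigenvector:
  fixes S :: "real^'n^'n"
  assumes sym: "transpose S = S" and W: "subspace W" and inv: "\<forall>z\<in>W. S *v z \<in> W"
    and x: "x \<in> W" "norm x = 1"
    and max: "\<And>z. z \<in> W \<Longrightarrow> z \<bullet> (S *v z) \<le> (x \<bullet> (S *v x)) * (norm z)\<^sup>2"
  shows "S *v x = (x \<bullet> (S *v x)) *\<^sub>R x"
proof -
  define l where "l = x \<bullet> (S *v x)"
  define y where "y = S *v x - l *\<^sub>R x"
  have xx: "x \<bullet> x = 1" using x(2) by (simp add: dot_square_norm)
  have yW: "y \<in> W" unfolding y_def using inv x(1) W by (simp add: subspace_diff subspace_scale)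
  have xy: "x \<bullet> y = 0" "y \<bullet> x = 0"
    unfolding y_def l_def using xx by (simp_all add: inner_diff inner_commute)
  have Sxy: "x \<bullet> (S *v y) = y \<bullet> y" "y \<bullet> (S *v x) = y \<bullet> y"
    using inner_matrix_vector_mult_transpose[of S x y] xy
    by (simp_all add: sym y_def inner_diff inner_commute)
  have "t * (2 * (y \<bullet> y)) \<le> t\<^sup>2 * (l * (y \<bullet> y) - y \<bullet> (S *v y))" for t
  proof -
    have "x + t *\<^sub>R y \<in> W" using x(1) yW W by (simp add: subspace_add subspace_scale)
    from max[OF this] have "(x + t *\<^sub>R y) \<bullet> (S *v (x + t *\<^sub>R y)) \<le> l * (norm (x + t *\<^sub>R y))\<^sup>2"
      unfolding l_def .
    moreover have "(norm (x + t *\<^sub>R y))\<^sup>2 = 1 + t\<^sup>2 * (y \<bullet> y)"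
      by (simp only: power2_norm_eq_inner) (simp add: inner_add xx xy power2_eq_square)
    ultimately show ?thesis
      by (simp add: Sxy l_def[symmetric] power2_eq_square algebra_simps)
  qed
  then have "2 * (y \<bullet> y) = 0" by (intro linear_le_quadratic_imp_zero) auto
  then show ?thesis by (simp add: y_def l_def)
qed

lemma symmetric_matrix_invariant_orthogonal_complement:
  fixes S :: "real^'n^'n"
  assumes sym: "transpose S = S" and inv: "\<forall>z\<in>W. S *v z \<in> W" and ev: "S *v x = c *\<^sub>R x"
  shows "\<forall>z\<in>W \<inter> {y. orthogonal x y}. S *v z \<in> W \<inter> {y. orthogonal x y}"
proof
  fix z assume "z \<in> W \<inter> {y. orthogonal x y}"
  then have "z \<in> W" "x \<bullet> z = 0" unfolding orthogonal_def by auto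
  moreover have "x \<bullet> (S *v z) = (S *v x) \<bullet> z"
    using inner_matrix_vector_mult_transpose[of S x z] sym by simp
  ultimately show "S *v z \<in> W \<inter> {y. orthogonal x y}"
    using inv ev unfolding orthogonal_def by auto
qed

lemma subspace_subset_span_insert_unit:
  assumes "subspace W" "x \<in> W" "norm x = 1" "W \<inter> {y. orthogonal x y} \<subseteq> span B"
  shows "W \<subseteq> span (insert x B)"
proof
  fix w assume "w \<in> W"
  have "x \<bullet> x = 1" using assms(3) by (simp add: dot_square_norm)
  with \<open>w \<in> W\<close> have "w - (x \<bullet> w) *\<^sub>R x \<in> W \<inter> {y. orthogonal x y}"
    using assms(1,2) by (simp add: orthogonal_def subspace_diff subspace_scale inner_diff_right)
  then have "w - (x \<bullet> w) *\<^sub>R x \<in> span (insert x B)"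
    using assms(4) span_mono[of B "insert x B"] by blast
  then show "w \<in> span (insert x B)"
    by (metis diff_add_cancel span_add span_base span_scale insertI1)
qed

lemma symmetric_matrix_invariant_subspace_eigenvectors:
  fixes S :: "real^'n^'n"
  assumes sym: "transpose S = S" and "subspace W" and "\<forall>z\<in>W. S *v z \<in> W"
  obtains B where "B \<subseteq> W" "pairwise orthogonal B" "\<And>x. x \<in> B \<Longrightarrow> norm x = 1"
    "\<And>x. x \<in> B \<Longrightarrow> \<exists>l. S *v x = l *\<^sub>R x" "W \<subseteq> span B"
proof -
  have "\<exists>B. B \<subseteq> W \<and> pairwise orthogonal B \<and> (\<forall>x\<in>B. norm x = 1 \<and> (\<exists>l. S *v x = l *\<^sub>R x))
       \<and> W \<subseteq> span B"
    using assms(2,3)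
  proof (induction "dim W" arbitrary: W rule: less_induct)
    case less
    show ?case
    proof (cases "W = {0}")
      case True
      then show ?thesis by (intro exI[of _ "{}"]) auto
    next
      case False
      obtain x where x: "x \<in> W" "norm x = 1"
        and max: "\<And>z. z \<in> W \<Longrightarrow> z \<bullet> (S *v z) \<le> (x \<bullet> (S *v x)) * (norm z)\<^sup>2"
        using quadratic_form_attains_max_on_subspace[OF less.prems(1) False] by blast
      have ev: "S *v x = (x \<bullet> (S *v x)) *\<^sub>R x"
        using rayleigh_maximizer_is_eigenvector[OF sym less.prems x max] .
      define W' where "W' = W \<inter> {y. orthogonal x y}"
      have W': "subspace W'" unfolding W'_def
        using subspace_inter[OF less.prems(1) subspace_orthogonal_to_vector[of x]] by simp
      have "x \<notin> W'" using x(2) unfolding W'_def orthogonal_def by (simp add: dot_square_norm)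
      then have "W' \<subset> W" using x(1) unfolding W'_def by auto
      then have "span W' \<subset> span W" using W' less.prems(1) by (simp add: span_eq_iff[THEN iffD2])
      then have "dim W' < dim W" by (rule dim_psubset)
      from less.hyps[OF this W'] obtain B' where B': "B' \<subseteq> W'" "pairwise orthogonal B'"
        "\<forall>y\<in>B'. norm y = 1 \<and> (\<exists>l. S *v y = l *\<^sub>R y)" "W' \<subseteq> span B'"
        using symmetric_matrix_invariant_orthogonal_complement[OF sym less.prems(2) ev]
        unfolding W'_def by blast
      have "pairwise orthogonal (insert x B')"
        using B'(1,2) unfolding W'_def by (auto simp: pairwise_insert orthogonal_commute)
      then show ?thesis
        using x ev B' subspace_subset_span_insert_unit[OF less.prems(1) x, of B']
        unfolding W'_def by (intro exI[of _ "insert x B'"]) blast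
    qed
  qed
  with that show ?thesis by blast
qed

lemma symmetric_matrix_orthonormal_eigenbasis:
  fixes S :: "real^'n^'n"
  assumes sym: "transpose S = S"
  obtains f :: "'n \<Rightarrow> real^'n" and l :: "'n \<Rightarrow> real"
  where "\<And>i. norm (f i) = 1" "\<And>i j. i \<noteq> j \<Longrightarrow> f i \<bullet> f j = 0" "\<And>i. S *v f i = l i *\<^sub>R f i"
proof -
  obtain B where B: "pairwise orthogonal B" "\<And>x. x \<in> B \<Longrightarrow> norm x = 1"
    "\<And>x. x \<in> B \<Longrightarrow> \<exists>l. S *v x = l *\<^sub>R x" "span B = UNIV"
    using symmetric_matrix_invariant_subspace_eigenvectors[OF sym subspace_UNIV]
    by (metis top_le UNIV_I)
  have "0 \<notin> B" using B(2) by fastforce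
  then have ind: "independent B" using B(1) pairwise_orthogonal_independent by blast
  then have "card B = CARD('n)"
    using dim_eq_card_independent[OF ind] dim_span[of B] B(4) by simp
  then obtain f where f: "bij_betw f (UNIV::'n set) B"
    using finite_same_card_bij[OF finite_class.finite_UNIV finiteI_independent[OF ind]] by metis
  then have fB: "f i \<in> B" for i by (auto simp: bij_betw_def)
  have "f i \<bullet> f j = 0" if "i \<noteq> j" for i j
    using B(1) f that by (auto simp: pairwise_def bij_betw_def inj_on_def orthogonal_def)
  moreover obtain l where "\<And>i. S *v f i = l i *\<^sub>R f i" using B(3)[OF fB] by metis
  ultimately show ?thesis using that B(2)[OF fB] by blast
qed

section \<open>Diagonal matrices and the singular value decomposition\<close>

lemma transpose_diag_mat [simp]: "transpose (diag_mat s) = diag_mat s"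
  by (simp add: diag_mat_def transpose_def vec_eq_iff)

lemma matrix_mul_diag_mat_nth: "(X ** diag_mat h) $ i $ j = X $ i $ j * h $ j"
proof -
  have "(X ** diag_mat h) $ i $ j = (\<Sum>k\<in>UNIV. if k = j then X $ i $ k * h $ j else 0)"
    unfolding diag_mat_def matrix_matrix_mult_def vec_lambda_beta by (rule sum.cong) auto
  then show ?thesis by simp
qed

lemma diag_mat_matrix_mul_nth: "(diag_mat h ** X) $ i $ j = h $ i * X $ i $ j"
proof -
  have "(diag_mat h ** X) $ i $ j = (\<Sum>k\<in>UNIV. if k = i then h $ i * X $ i $ j else 0)"
    unfolding diag_mat_def matrix_matrix_mult_def vec_lambda_beta by (rule sum.cong) auto
  then show ?thesis by simp
qed

lemma diag_mat_matrix_mul_row: "(diag_mat h ** X) $ i = h $ i *\<^sub>R X $ i"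
  by (simp add: vec_eq_iff diag_mat_matrix_mul_nth)

lemma diag_mat_mult_diag_mat: "diag_mat a ** diag_mat b = diag_mat (\<chi> i. a $ i * b $ i)"
  by (simp add: vec_eq_iff diag_mat_matrix_mul_nth) (simp add: diag_mat_def)

lemma trace_diag_mat: "trace (diag_mat a) = (\<Sum>i\<in>UNIV. a $ i)"
  by (simp add: trace_def diag_mat_def)

lemma invertible_diag_mat_nonzero:
  assumes "invertible (diag_mat g)"
  shows "g $ i \<noteq> 0"
proof -
  have "det (diag_mat g) = (\<Prod>i\<in>UNIV. g $ i)"
    by (subst det_diagonal) (simp_all add: diag_mat_def)
  then show ?thesis using assms by (simp add: invertible_det_nz)
qed

lemma matrix_inv_diag_mat:
  assumes "\<And>i. g $ i \<noteq> 0"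
  shows "matrix_inv (diag_mat g) = diag_mat (\<chi> i. inverse (g $ i))"
  by (rule matrix_inv_eqI)
    (simp only: diag_mat_mult_diag_mat, simp add: assms diag_mat_def mat_def vec_eq_iff)

lemma matrix_inv_diagonal:
  fixes G :: "real^'n^'n"
  assumes "invertible G" and "\<And>i j. i \<noteq> j \<Longrightarrow> G $ i $ j = 0"
  shows "matrix_inv G = diag_mat (\<chi> i. inverse (G $ i $ i))"
proof -
  define g where "g = (\<chi> i. G $ i $ i)"
  have G: "G = diag_mat g"
    using assms(2) by (auto simp: g_def diag_mat_def vec_eq_iff)
  have "invertible (diag_mat g)" using assms(1) unfolding G .
  then have "matrix_inv G = diag_mat (\<chi> i. inverse (g $ i))"
    unfolding G by (simp add: matrix_inv_diag_mat invertible_diag_mat_nonzero)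
  then show ?thesis by (simp add: g_def)
qed

lemma invertible_matrix_svd:
  fixes M :: "real^'n^'n"
  assumes "invertible M"
  obtains s U V where "\<forall>i. 0 \<le> s $ i" "orthogonal_matrix U" "orthogonal_matrix V"
    "M = U ** diag_mat s ** transpose V"
proof -
  obtain f :: "'n \<Rightarrow> real^'n" and l where f: "\<And>i. norm (f i) = 1" "\<And>i j. i \<noteq> j \<Longrightarrow> f i \<bullet> f j = 0"
    and ev: "\<And>i. (transpose M ** M) *v f i = l i *\<^sub>R f i"
    using symmetric_matrix_orthonormal_eigenbasis[of "transpose M ** M"]
    by (metis matrix_transpose_mul transpose_transpose)
  define s :: "real^'n" where "s = (\<chi> j. norm (M *v f j))"
  define U :: "real^'n^'n" where "U = (\<chi> i j. (M *v f j) $ i / s $ j)"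
  define V :: "real^'n^'n" where "V = (\<chi> i j. f j $ i)"
  have "M *v f j \<noteq> 0" for j
    using f(1)[of j] inj_matrix_vector_mult[OF assms]
    by (metis injD matrix_vector_mult_0_right norm_zero zero_neq_one)
  then have s_pos: "0 < s $ j" for j unfolding s_def by simp
  have "(M *v f i) \<bullet> (M *v f j) = 0" if "i \<noteq> j" for i j
    using inner_matrix_vector_mult_transpose[of M "f i" "M *v f j"] ev[of j] f(2)[OF that]
    by (simp add: matrix_vector_mul_assoc)
  moreover have "column j U = inverse (s $ j) *\<^sub>R (M *v f j)" for j
    unfolding U_def column_def by (simp add: vec_eq_iff divide_inverse mult.commute)
  ultimately have "orthogonal_matrix U"
    unfolding orthogonal_matrix_orthonormal_columns orthogonal_def using s_pos by (simp add: s_def)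
  moreover have "orthogonal_matrix V"
    unfolding orthogonal_matrix_orthonormal_columns orthogonal_def using f
    by (simp add: V_def column_def)
  moreover have "(U ** diag_mat s) $ i $ j = (M ** V) $ i $ j" for i j
  proof -
    have "(U ** diag_mat s) $ i $ j = U $ i $ j * s $ j" by (rule matrix_mul_diag_mat_nth)
    also have "\<dots> = (M *v f j) $ i" using s_pos[of j] by (simp add: U_def)
    also have "\<dots> = (M ** V) $ i $ j"
      by (simp add: V_def matrix_matrix_mult_def matrix_vector_mult_def)
    finally show ?thesis .
  qed
  then have "U ** diag_mat s = M ** V" by (simp add: vec_eq_iff)
  then have "M = U ** diag_mat s ** transpose V"
    using \<open>orthogonal_matrix V\<close> by (simp add: matrix_mul_assoc[symmetric] orthogonal_matrix_def)
  moreover have "\<forall>i. 0 \<le> s $ i" using s_pos less_imp_le by blast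
  ultimately show ?thesis using that by blast
qed

definition frobenius_sq :: "real^'n^'m \<Rightarrow> real" where
  "frobenius_sq M = (\<Sum>i\<in>UNIV. \<Sum>j\<in>UNIV. (M $ i $ j)\<^sup>2)"

section \<open>The Schatten 4-norm\<close>

lemma schatten4_nonneg: "0 \<le> schatten4 M"
  unfolding schatten4_def by (rule powr_ge_zero)

lemma frobenius_sq_nonneg: "0 \<le> frobenius_sq M"
  unfolding frobenius_sq_def by (intro sum_nonneg) simp

lemma trace_square_symmetric:
  fixes P :: "real^'n^'n"
  assumes "transpose P = P"
  shows "trace (P ** P) = frobenius_sq P"
proof -
  have "P $ j $ i = P $ i $ j" for i j using assms by (metis transpose_def vec_lambda_beta)
  then show ?thesis
    by (simp add: trace_def matrix_matrix_mult_def frobenius_sq_def power2_eq_square)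
qed

lemma svd_sum_power4:
  fixes M U V :: "real^'n^'n"
  assumes "orthogonal_matrix U" "orthogonal_matrix V" "M = U ** diag_mat s ** transpose V"
  shows "(\<Sum>i\<in>UNIV. (s $ i) ^ 4) = trace ((transpose M ** M) ** (transpose M ** M))"
proof -
  define D where "D = diag_mat s"
  have UU: "transpose U ** U = mat 1" and VV: "transpose V ** V = mat 1"
    using assms(1,2) by (simp_all add: orthogonal_matrix_def)
  have "transpose M ** M = V ** D ** (transpose U ** U) ** D ** transpose V"
    using assms(3) by (simp add: D_def matrix_transpose_mul matrix_mul_assoc)
  also have "\<dots> = V ** (D ** D) ** transpose V" by (simp add: UU matrix_mul_assoc)
  finally have "(transpose M ** M) ** (transpose M ** M)
      = V ** (D ** D) ** (transpose V ** V) ** (D ** D) ** transpose V"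
    by (simp add: matrix_mul_assoc)
  also have "\<dots> = V ** (D ** D ** D ** D) ** transpose V" by (simp add: VV matrix_mul_assoc)
  finally have "trace ((transpose M ** M) ** (transpose M ** M))
      = trace (transpose V ** (V ** (D ** D ** D ** D)))"
    by (metis trace_mul_sym)
  also have "\<dots> = trace (D ** D ** D ** D)" by (simp add: matrix_mul_assoc VV)
  also have "\<dots> = (\<Sum>i\<in>UNIV. (s $ i) ^ 4)"
    by (simp add: D_def diag_mat_mult_diag_mat trace_diag_mat power4_eq_xxxx mult.assoc)
  finally show ?thesis ..
qed

text \<open>Invertibility is only used to guarantee an SVD, without which the choice in
  \<^const>\<open>singular_values\<close> is unconstrained.\<close>
lemma schatten4_eq_frobenius_gram:
  fixes M :: "real^'n^'n"
  assumes "invertible M"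
  shows "schatten4 M = frobenius_sq (transpose M ** M) powr (1/4)"
proof -
  have "\<exists>s. (\<forall>i. 0 \<le> s $ i) \<and>
      (\<exists>U V. orthogonal_matrix U \<and> orthogonal_matrix V \<and> M = U ** diag_mat s ** transpose V)"
    using invertible_matrix_svd[OF assms] by metis
  from someI_ex[OF this] obtain U V where "orthogonal_matrix U" "orthogonal_matrix V"
    "M = U ** diag_mat (singular_values M) ** transpose V"
    unfolding singular_values_def by blast
  from svd_sum_power4[OF this] show ?thesis
    unfolding schatten4_def by (simp add: trace_square_symmetric matrix_transpose_mul)
qed

lemma frobenius_sq_diag_scaling:
  fixes Q :: "real^'n^'m"
  assumes a: "\<And>i. \<bar>a $ i\<bar> \<le> \<alpha>" and b: "\<And>j. \<bar>b $ j\<bar> \<le> \<beta>"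
  shows "frobenius_sq (diag_mat a ** Q ** diag_mat b) \<le> (\<alpha> * \<beta>)\<^sup>2 * frobenius_sq Q"
proof -
  have "(a $ i * Q $ i $ j * b $ j)\<^sup>2 \<le> (\<alpha> * \<beta>)\<^sup>2 * (Q $ i $ j)\<^sup>2" for i j
  proof -
    have "\<bar>a $ i * b $ j\<bar> \<le> \<alpha> * \<beta>"
      using a[of i] b[of j] by (simp add: abs_mult mult_mono')
    then have "(a $ i * b $ j)\<^sup>2 \<le> (\<alpha> * \<beta>)\<^sup>2"
      by (metis abs_ge_zero power2_abs power_mono)
    then have "(a $ i * b $ j)\<^sup>2 * (Q $ i $ j)\<^sup>2 \<le> (\<alpha> * \<beta>)\<^sup>2 * (Q $ i $ j)\<^sup>2"
      by (rule mult_right_mono) simp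
    then show ?thesis by (simp add: power_mult_distrib mult_ac)
  qed
  then show ?thesis
    unfolding frobenius_sq_def sum_distrib_left
    by (intro sum_mono) (simp add: matrix_mul_diag_mat_nth diag_mat_matrix_mul_nth)
qed

lemma schatten4_mult_diag_mat_le:
  fixes X :: "real^'n^'n"
  assumes "invertible X" "invertible (X ** diag_mat h)" and h: "\<And>i. \<bar>h $ i\<bar> \<le> m"
  shows "schatten4 (X ** diag_mat h) \<le> m * schatten4 X"
proof -
  have m: "0 \<le> m" using h by (meson abs_ge_zero order_trans)
  have "(m ^ 4) powr (1/4) = m"
    using powr_realpow'[OF m, of 4] powr_powr[of m 4 "1/4"] m by simp
  have "transpose (X ** diag_mat h) ** (X ** diag_mat h)
      = diag_mat h ** (transpose X ** X) ** diag_mat h"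
    by (simp add: matrix_transpose_mul matrix_mul_assoc)
  then have "frobenius_sq (transpose (X ** diag_mat h) ** (X ** diag_mat h))
      \<le> m ^ 4 * frobenius_sq (transpose X ** X)"
    using frobenius_sq_diag_scaling[of h m h m "transpose X ** X"] h
    by (simp add: power2_eq_square power4_eq_xxxx mult_ac)
  then have "schatten4 (X ** diag_mat h) \<le> (m ^ 4 * frobenius_sq (transpose X ** X)) powr (1/4)"
    unfolding schatten4_eq_frobenius_gram[OF assms(2)]
    by (intro powr_mono2) (simp_all add: frobenius_sq_nonneg)
  also have "\<dots> = m * schatten4 X"
    using \<open>(m ^ 4) powr (1/4) = m\<close> by (simp add: powr_mult schatten4_eq_frobenius_gram[OF assms(1)])
  finally show ?thesis .
qed

section \<open>The spectral norm\<close>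

lemma spec_norm_nonneg: "0 \<le> spec_norm M"
  unfolding spec_norm_def by (rule onorm_pos_le) simp

lemma norm_matrix_vector_mult_le_spec_norm: "norm (M *v x) \<le> spec_norm M * norm x"
  unfolding spec_norm_def by (rule onorm) simp

lemma norm_row_le_spec_norm:
  fixes M :: "real^'n^'m"
  shows "norm (M $ i) \<le> spec_norm M"
proof -
  have "(norm (M $ i))\<^sup>2 = (M *v (M $ i)) $ i"
    by (simp add: matrix_vector_mult_def inner_vec_def power2_norm_eq_inner)
  also have "\<dots> \<le> norm (M *v (M $ i))" using component_le_norm_cart[of "M *v M $ i" i] by simp
  also have "\<dots> \<le> spec_norm M * norm (M $ i)" by (rule norm_matrix_vector_mult_le_spec_norm)
  finally show ?thesis
    using spec_norm_nonneg[of M] by (cases "M $ i = 0") (auto simp: power2_eq_square)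
qed

lemma spec_norm_le_spec_norm_transpose:
  fixes M :: "real^'n^'m"
  shows "spec_norm M \<le> spec_norm (transpose M)"
proof -
  have "norm (M *v x) \<le> spec_norm (transpose M) * norm x" for x
  proof -
    have "(norm (M *v x))\<^sup>2 = x \<bullet> (transpose M *v (M *v x))"
      by (simp add: power2_norm_eq_inner inner_matrix_vector_mult_transpose)
    also have "\<dots> \<le> norm x * (spec_norm (transpose M) * norm (M *v x))"
      by (intro order_trans[OF norm_cauchy_schwarz] mult_left_mono
          norm_matrix_vector_mult_le_spec_norm) simp
    finally show ?thesis
      using spec_norm_nonneg[of "transpose M"]
      by (cases "M *v x = 0") (auto simp: power2_eq_square mult_ac)
  qed
  then show ?thesis unfolding spec_norm_def by (rule onorm_le)
qed

lemma spec_norm_transpose: "spec_norm (transpose M) = spec_norm M"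
  using spec_norm_le_spec_norm_transpose[of M] spec_norm_le_spec_norm_transpose[of "transpose M"]
  by simp

lemma sum_support_le_card_bound:
  fixes P :: "real^'n^'m" and f :: "'m \<Rightarrow> real"
  assumes card: "\<And>i. card {j. P $ i $ j \<noteq> 0} \<le> K" and f: "\<And>i. 0 \<le> f i"
  shows "(\<Sum>i\<in>UNIV. \<Sum>j\<in>UNIV. if P $ i $ j \<noteq> 0 then f i else 0) \<le> real K * (\<Sum>i\<in>UNIV. f i)"
  unfolding sum_distrib_left
proof (rule sum_mono)
  fix i
  have "(\<Sum>j\<in>UNIV. if P $ i $ j \<noteq> 0 then f i else 0) = real (card {j. P $ i $ j \<noteq> 0}) * f i"
    by (simp add: sum.If_cases)
  also have "\<dots> \<le> real K * f i" using card[of i] f[of i] by (intro mult_right_mono) auto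
  finally show "(\<Sum>j\<in>UNIV. if P $ i $ j \<noteq> 0 then f i else 0) \<le> real K * f i" .
qed

text \<open>A Schur test: on the support of \<open>P\<close> bound \<open>y\<^sub>i P\<^sub>i\<^sub>j y\<^sub>j\<close> by \<open>(y\<^sub>i\<^sup>2 + y\<^sub>j\<^sup>2) / 2\<close>;
  by symmetry both halves are sums over the rows of the support.\<close>
lemma quadratic_form_le_sparsity:
  fixes P :: "real^'n^'n"
  assumes sym: "transpose P = P" and bounded: "\<And>i j. \<bar>P $ i $ j\<bar> \<le> 1"
    and sparse: "\<And>i. card {j. P $ i $ j \<noteq> 0} \<le> K"
  shows "y \<bullet> (P *v y) \<le> real K * (norm y)\<^sup>2"
proof -
  let ?half = "\<lambda>i j. if P $ i $ j \<noteq> 0 then (y $ i)\<^sup>2 / 2 else 0"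
  have P_sym: "P $ j $ i = P $ i $ j" for i j using sym by (metis transpose_def vec_lambda_beta)
  have "y $ i * P $ i $ j * y $ j \<le> ?half i j + ?half j i" for i j
  proof (cases "P $ i $ j = 0")
    case False
    have "y $ i * P $ i $ j * y $ j \<le> \<bar>y $ i * P $ i $ j * y $ j\<bar>" by (rule abs_ge_self)
    also have "\<dots> = \<bar>y $ i\<bar> * \<bar>y $ j\<bar> * \<bar>P $ i $ j\<bar>" by (simp add: abs_mult mult_ac)
    also have "\<dots> \<le> \<bar>y $ i\<bar> * \<bar>y $ j\<bar>" using bounded[of i j] by (simp add: mult_left_le)
    also have "\<dots> \<le> ((y $ i)\<^sup>2 + (y $ j)\<^sup>2) / 2"
      using sum_squares_bound[of "\<bar>y $ i\<bar>" "\<bar>y $ j\<bar>"] by simp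
    finally show ?thesis using False P_sym[of i j] by (simp add: add_divide_distrib)
  qed simp
  then have "y \<bullet> (P *v y) \<le> (\<Sum>i\<in>UNIV. \<Sum>j\<in>UNIV. ?half i j) + (\<Sum>i\<in>UNIV. \<Sum>j\<in>UNIV. ?half j i)"
    unfolding sum.distrib[symmetric]
    by (simp add: inner_vec_def matrix_vector_mult_def sum_distrib_left sum_mono mult_ac)
  also have "\<dots> = 2 * (\<Sum>i\<in>UNIV. \<Sum>j\<in>UNIV. ?half i j)" using sum.swap[of ?half UNIV UNIV] by simp
  also have "\<dots> \<le> real K * (\<Sum>i\<in>UNIV. (y $ i)\<^sup>2)"
    using sum_support_le_card_bound[OF sparse, of "\<lambda>i. (y $ i)\<^sup>2 / 2"]
    by (simp add: sum_divide_distrib[symmetric])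
  also have "\<dots> = real K * (norm y)\<^sup>2"
    by (simp only: power2_norm_eq_inner) (simp add: inner_vec_def power2_eq_square)
  finally show ?thesis .
qed

lemma spec_norm_le_sqrt_sparsity:
  fixes A :: "real^'n^'m"
  assumes rows: "\<And>i. norm (A $ i) \<le> 1"
    and sparse: "\<And>i. card {j. (A ** transpose A) $ i $ j \<noteq> 0} \<le> K"
  shows "spec_norm A \<le> sqrt (real K)"
proof -
  have gram: "(A ** transpose A) $ i $ j = A $ i \<bullet> A $ j" for i j
    by (simp add: matrix_matrix_mult_def transpose_def inner_vec_def)
  have "\<bar>(A ** transpose A) $ i $ j\<bar> \<le> 1" for i j
    unfolding gram using Cauchy_Schwarz_ineq2[of "A $ i" "A $ j"] rows[of i] rows[of j]
    by (meson mult_le_one norm_ge_zero order_trans)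
  moreover have "(norm (transpose A *v y))\<^sup>2 = y \<bullet> ((A ** transpose A) *v y)" for y
    by (simp only: power2_norm_eq_inner inner_matrix_vector_mult_transpose transpose_transpose
        matrix_vector_mul_assoc)
  ultimately have "(norm (transpose A *v y))\<^sup>2 \<le> real K * (norm y)\<^sup>2" for y
    using quadratic_form_le_sparsity[of "A ** transpose A" K y] sparse
    by (simp add: matrix_transpose_mul)
  then have "norm (transpose A *v y) \<le> sqrt (real K) * norm y" for y
    by (metis real_le_rsqrt real_sqrt_mult real_sqrt_abs abs_norm_cancel)
  then have "spec_norm (transpose A) \<le> sqrt (real K)"
    unfolding spec_norm_def by (rule onorm_le)
  then show ?thesis by (simp add: spec_norm_transpose)
qed

theorem lemma5:
  fixes A G :: "real^'n^'n" and K :: nat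
  assumes "invertible A"
    and "\<And>i. norm (A $ i) = 1"
    and "\<And>i. card {j. (A ** transpose A) $ i $ j \<noteq> 0} \<le> K"
    and "invertible G"
    and "\<And>i j. i \<noteq> j \<Longrightarrow> G $ i $ j = 0"
  shows "kappa A = spec_norm A * schatten4 (matrix_inv A)
     \<and> kappa A \<le> sqrt (real K) * spec_norm (matrix_inv G ** A) * schatten4 (matrix_inv A ** G)
     \<and> sqrt (real K) * spec_norm (matrix_inv G ** A) * schatten4 (matrix_inv A ** G)
         = sqrt (real K) * kappa (matrix_inv G ** A)"
proof -
  define h where "h = (\<chi> i. inverse (G $ i $ i))"
  define m where "m = spec_norm (matrix_inv G ** A)"
  have Ginv: "matrix_inv G = diag_mat h"
    unfolding h_def using assms(4,5) by (rule matrix_inv_diagonal)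
  have h_le: "\<bar>h $ i\<bar> \<le> m" for i
    using norm_row_le_spec_norm[of "matrix_inv G ** A" i] assms(2)[of i]
    by (simp add: m_def Ginv diag_mat_matrix_mul_row)
  have "matrix_inv A = (matrix_inv A ** G) ** diag_mat h"
    using matrix_inv_right[OF assms(4)] by (simp add: Ginv matrix_mul_assoc[symmetric])
  then have schatten: "schatten4 (matrix_inv A) \<le> m * schatten4 (matrix_inv A ** G)"
    using schatten4_mult_diag_mat_le[OF _ _ h_le] invertible_matrix_inv[OF assms(1)]
      invertible_mult[OF invertible_matrix_inv[OF assms(1)] assms(4)] by metis
  have "kappa A = spec_norm A * schatten4 (matrix_inv A)" unfolding kappa_def ..
  also have "\<dots> \<le> sqrt (real K) * (m * schatten4 (matrix_inv A ** G))"
    using spec_norm_le_sqrt_sparsity[of A K] assms(2,3) schatten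
    by (intro mult_mono) (simp_all add: schatten4_nonneg)
  finally show ?thesis
    unfolding kappa_def m_def matrix_inv_matrix_inv_mult[OF assms(1,4)] by (simp add: mult.assoc)
qed

end
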